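(* Let $G=(V,E)$ be an undirected graph, $k$ a positive integer, and $f:V\to\mathbb{Z}\cup\{-\infty\}$, $g:V\to\mathbb{Z}\cup\{+\infty\}$ with $f\le g$. A $k$-edge-connected $(f,g)$-bounded orientation $D$ of $G$ is decreasingly minimal among all $k$-edge-connected $(f,g)$-bounded orientations of $G$ if and only if there are no two nodes $s,t$ for which $\varrho_D(t)\ge\varrho_D(s)+2$, $\varrho_D(t)>f(t)$, $\varrho_D(s)<g(s)$, and $D$ contains $k+1$ arc-disjoint directed paths from $s$ to $t$.
   Context: $\varrho_D(v)$ is the number of arcs with head $v$; $D$ is $(f,g)$-bounded if $f(v)\le\varrho_D(v)\le g(v)$ for all $v$; $D$ is $k$-edge-connected if every non-empty proper subset of $V$ has at least $k$ entering arcs. Decreasingly minimal: in-degree vector with largest component as small as possible within the class, then second largest, etc. *)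

theory Defs
  imports Complex_Main "HOL-Library.Extended_Real" "HOL-Library.Multiset"
begin

text \<open>An undirected multigraph G = (V, E): a finite vertex set V, a finite edge
  index set E, and for each edge e its two end-nodes ends e (an unordered pair,
  given as an ordered pair whose order is immaterial).  An orientation D assigns
  to each edge a direction: D e = True orients e from fst (ends e) to snd (ends e),
  D e = False orients it the other way.\<close>

definition tail :: "('e \<Rightarrow> 'a \<times> 'a) \<Rightarrow> ('e \<Rightarrow> bool) \<Rightarrow> 'e \<Rightarrow> 'a" where
  "tail ends D e = (if D e then fst (ends e) else snd (ends e))"

definition head :: "('e \<Rightarrow> 'a \<times> 'a) \<Rightarrow> ('e \<Rightarrow> bool) \<Rightarrow> 'e \<Rightarrow> 'a" where
  "head ends D e = (if D e then snd (ends e) else fst (ends e))"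

definition indeg :: "'e set \<Rightarrow> ('e \<Rightarrow> 'a \<times> 'a) \<Rightarrow> ('e \<Rightarrow> bool) \<Rightarrow> 'a \<Rightarrow> nat" where
  "indeg E ends D v = card {e \<in> E. head ends D e = v}"

definition fg_bounded ::
  "'a set \<Rightarrow> 'e set \<Rightarrow> ('e \<Rightarrow> 'a \<times> 'a) \<Rightarrow> ('a \<Rightarrow> ereal) \<Rightarrow> ('a \<Rightarrow> ereal) \<Rightarrow> ('e \<Rightarrow> bool) \<Rightarrow> bool" where
  "fg_bounded V E ends f g D \<longleftrightarrow>
     (\<forall>v\<in>V. f v \<le> ereal (real (indeg E ends D v)) \<and> ereal (real (indeg E ends D v)) \<le> g v)"

definition k_edge_connected ::
  "nat \<Rightarrow> 'a set \<Rightarrow> 'e set \<Rightarrow> ('e \<Rightarrow> 'a \<times> 'a) \<Rightarrow> ('e \<Rightarrow> bool) \<Rightarrow> bool" where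
  "k_edge_connected k V E ends D \<longleftrightarrow>
     (\<forall>X. X \<subseteq> V \<and> X \<noteq> {} \<and> X \<noteq> V \<longrightarrow>
        k \<le> card {e \<in> E. head ends D e \<in> X \<and> tail ends D e \<notin> X})"

definition indeg_desc :: "'a set \<Rightarrow> 'e set \<Rightarrow> ('e \<Rightarrow> 'a \<times> 'a) \<Rightarrow> ('e \<Rightarrow> bool) \<Rightarrow> nat list" where
  "indeg_desc V E ends D = rev (sorted_list_of_multiset (image_mset (indeg E ends D) (mset_set V)))"

definition lex_less :: "nat list \<Rightarrow> nat list \<Rightarrow> bool" where
  "lex_less xs ys \<longleftrightarrow> (\<exists>i < length xs. take i xs = take i ys \<and> xs ! i < ys ! i)"

definition dec_min ::
  "'a set \<Rightarrow> 'e set \<Rightarrow> ('e \<Rightarrow> 'a \<times> 'a) \<Rightarrow> (('e \<Rightarrow> bool) \<Rightarrow> bool) \<Rightarrow> ('e \<Rightarrow> bool) \<Rightarrow> bool" where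
  "dec_min V E ends P D \<longleftrightarrow> P D \<and>
     \<not> (\<exists>D'. P D' \<and> lex_less (indeg_desc V E ends D') (indeg_desc V E ends D))"

definition dir_path ::
  "'e set \<Rightarrow> ('e \<Rightarrow> 'a \<times> 'a) \<Rightarrow> ('e \<Rightarrow> bool) \<Rightarrow> 'a \<Rightarrow> 'a \<Rightarrow> 'e list \<Rightarrow> bool" where
  "dir_path E ends D s t p \<longleftrightarrow>
     set p \<subseteq> E \<and>
     (p = [] \<longrightarrow> s = t) \<and>
     (p \<noteq> [] \<longrightarrow> tail ends D (hd p) = s \<and> head ends D (last p) = t) \<and>
     (\<forall>i. Suc i < length p \<longrightarrow> head ends D (p ! i) = tail ends D (p ! Suc i)) \<and>
     distinct (s # map (head ends D) p)"

definition arc_disjoint_paths ::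
  "nat \<Rightarrow> 'e set \<Rightarrow> ('e \<Rightarrow> 'a \<times> 'a) \<Rightarrow> ('e \<Rightarrow> bool) \<Rightarrow> 'a \<Rightarrow> 'a \<Rightarrow> bool" where
  "arc_disjoint_paths m E ends D s t \<longleftrightarrow>
     (\<exists>P :: nat \<Rightarrow> 'e list.
        (\<forall>i<m. dir_path E ends D s t (P i)) \<and>
        (\<forall>i<m. \<forall>j<m. i \<noteq> j \<longrightarrow> set (P i) \<inter> set (P j) = {}))"

end

theory Submission
  imports Defs
begin

text \<open>If \<open>s, t\<close> is an improving pair, reversing one of the \<open>k + 1\<close> arc-disjoint \<open>s\<close>-\<open>t\<close>
  paths keeps \<open>D\<close> \<open>k\<close>-edge-connected (a set separating \<open>t\<close> from \<open>s\<close> is entered by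
  \<open>k + 1\<close> arcs) and, by integrality, \<open>(f, g)\<close>-bounded, and moves one unit of in-degree from
  \<open>t\<close> to \<open>s\<close>; this decreases the sorted in-degree vector.

  Conversely, let \<open>D'\<close> be better than \<open>D\<close>, first at level \<open>\<beta>\<close> (the number of vertices of
  in-degree \<open>\<ge> \<beta>\<close> drops). Let \<open>T\<close> be the vertices of in-degree \<open>\<ge> \<beta>\<close> above \<open>f\<close>, and
  \<open>S\<close> those of in-degree \<open>\<le> \<beta> - 2\<close> below \<open>g\<close>. Without an improving pair, Menger's
  theorem separates every \<open>t \<in> T\<close> from every \<open>s \<in> S\<close> by a tight set of \<open>D\<close>, one entered
  by exactly \<open>k\<close> arcs. Tight sets cross, so uncrossing yields \<open>Z \<supseteq> T\<close> avoiding \<open>S\<close> that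
  \<open>D'\<close> enters at least as often as \<open>D\<close>; thus the in-degree sum of \<open>D'\<close> on \<open>Z\<close> is at least
  that of \<open>D\<close>. Counting level by level gives the opposite strict inequality.\<close>

section \<open>Decreasingly sorted vectors and level counts\<close>

definition desc_vector :: "'a set \<Rightarrow> ('a \<Rightarrow> nat) \<Rightarrow> nat list" where
  "desc_vector V a = rev (sorted_list_of_multiset (image_mset a (mset_set V)))"

lemma indeg_desc_eq_desc_vector: "indeg_desc V E ends D = desc_vector V (indeg E ends D)"
  by (simp add: indeg_desc_def desc_vector_def)

lemma sorted_desc_nth_ge_iff:
  fixes xs :: "nat list"
  assumes "sorted_wrt (\<ge>) xs" "j < length xs"
  shows "c \<le> xs ! j \<longleftrightarrow> j < length (filter (\<lambda>x. c \<le> x) xs)"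
  using assms
proof (induction xs arbitrary: j)
  case Nil
  then show ?case by simp
next
  case (Cons x xs)
  show ?case
  proof (cases "c \<le> x")
    case True
    then show ?thesis using Cons by (cases j) auto
  next
    case False
    then have "filter (\<lambda>x. c \<le> x) xs = []"
      using Cons.prems(1) by (auto simp: filter_empty_conv)
    moreover have "(x # xs) ! j \<le> x"
      using Cons.prems by (cases j) auto
    ultimately show ?thesis using False by simp
  qed
qed

lemma length_desc_vector: "finite V \<Longrightarrow> length (desc_vector V a) = card V"
  unfolding desc_vector_def
  by (metis length_rev mset_sorted_list_of_multiset size_image_mset size_mset size_mset_set)

lemma length_filter_desc_vector:
  assumes "finite V"
  shows "length (filter P (desc_vector V a)) = card {v\<in>V. P (a v)}"
proof -
  have "length (filter P (desc_vector V a)) = size (filter_mset P (mset (desc_vector V a)))"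
    by (metis mset_filter size_mset)
  also have "mset (desc_vector V a) = image_mset a (mset_set V)"
    by (simp add: desc_vector_def)
  finally show ?thesis
    using assms by (simp add: filter_mset_image_mset)
qed

text \<open>The sorted vector is determined by the level counts \<open>card {v\<in>V. c \<le> a v}\<close>, so
  lexicographic comparison of sorted vectors reduces to comparing level counts.\<close>

lemma desc_vector_nth_ge_iff:
  assumes "finite V" "j < card V"
  shows "c \<le> desc_vector V a ! j \<longleftrightarrow> j < card {v\<in>V. c \<le> a v}"
proof -
  have "sorted_wrt (\<ge>) (desc_vector V a)"
    by (simp add: desc_vector_def sorted_wrt_rev)
  then show ?thesis
    using sorted_desc_nth_ge_iff[of "desc_vector V a" j c] assms
      length_desc_vector[of V a] length_filter_desc_vector[of V "\<lambda>x. c \<le> x" a]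
    by simp
qed

lemma desc_vector_nth_eq_if_level_cards_eq:
  assumes fin: "finite V"
    and above: "\<forall>c>\<beta>. card {v\<in>V. c \<le> b v} = card {v\<in>V. c \<le> a v}"
    and jb: "j < card {v\<in>V. \<beta> \<le> b v}" and ja: "j < card {v\<in>V. \<beta> \<le> a v}"
  shows "desc_vector V b ! j = desc_vector V a ! j"
proof -
  have "card {v\<in>V. \<beta> \<le> b v} \<le> card V"
    by (rule card_mono[OF fin]) auto
  then have jV: "j < card V"
    using jb by linarith
  note nth_ge = desc_vector_nth_ge_iff[OF fin jV]
  have ge: "c \<le> desc_vector V b ! j \<longleftrightarrow> c \<le> desc_vector V a ! j" if "\<beta> \<le> c" for c
  proof (cases "c = \<beta>")
    case False
    then show ?thesis using that above nth_ge[of c a] nth_ge[of c b] by simp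
  qed (use jb ja nth_ge in simp)
  have "\<beta> \<le> desc_vector V b ! j" "\<beta> \<le> desc_vector V a ! j"
    using jb ja nth_ge by simp_all
  then show ?thesis
    using ge[of "desc_vector V b ! j"] ge[of "desc_vector V a ! j"] by simp
qed

lemma lex_less_desc_vectorI:
  assumes fin: "finite V"
    and above: "\<forall>c>\<beta>. card {v\<in>V. c \<le> b v} = card {v\<in>V. c \<le> a v}"
    and at: "card {v\<in>V. \<beta> \<le> b v} < card {v\<in>V. \<beta> \<le> a v}"
  shows "lex_less (desc_vector V b) (desc_vector V a)"
proof -
  define i where "i = card {v\<in>V. \<beta> \<le> b v}"
  have "card {v\<in>V. \<beta> \<le> a v} \<le> card V"
    by (rule card_mono[OF fin]) auto
  then have iV: "i < card V"
    using at i_def by linarith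
  have "take i (desc_vector V b) = take i (desc_vector V a)"
    by (rule nth_take_lemma)
      (use desc_vector_nth_eq_if_level_cards_eq[OF fin above] at iV length_desc_vector[OF fin]
        in \<open>auto simp: i_def\<close>)
  moreover have "desc_vector V b ! i < desc_vector V a ! i"
    using desc_vector_nth_ge_iff[OF fin iV, of \<beta> a] desc_vector_nth_ge_iff[OF fin iV, of \<beta> b]
      i_def at by simp
  ultimately show ?thesis
    unfolding lex_less_def using iV length_desc_vector[OF fin, of b] by (intro exI[of _ i]) auto
qed

lemma lex_less_desc_vectorE:
  assumes fin: "finite V" and lex: "lex_less (desc_vector V b) (desc_vector V a)"
  obtains \<beta> where "\<forall>c>\<beta>. card {v\<in>V. c \<le> b v} \<le> card {v\<in>V. c \<le> a v}"
    and "card {v\<in>V. \<beta> \<le> b v} < card {v\<in>V. \<beta> \<le> a v}"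
proof -
  obtain i where i: "i < length (desc_vector V b)"
    "take i (desc_vector V b) = take i (desc_vector V a)"
    "desc_vector V b ! i < desc_vector V a ! i"
    using lex unfolding lex_less_def by blast
  have iV: "i < card V" using i(1) length_desc_vector[OF fin] by simp
  define \<beta> where "\<beta> = desc_vector V a ! i"
  have at_a: "i < card {v\<in>V. \<beta> \<le> a v}"
    using desc_vector_nth_ge_iff[OF fin iV, of \<beta> a] \<beta>_def by simp
  have at_b: "\<not> i < card {v\<in>V. \<beta> \<le> b v}"
    using desc_vector_nth_ge_iff[OF fin iV, of \<beta> b] \<beta>_def i(3) by simp
  have "card {v\<in>V. c \<le> b v} \<le> card {v\<in>V. c \<le> a v}" if c: "c > \<beta>" for c
  proof (cases "card {v\<in>V. c \<le> b v}")
    case (Suc n)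
    have "card {v\<in>V. c \<le> b v} \<le> card {v\<in>V. \<beta> \<le> b v}"
      by (rule card_mono) (use fin c in auto)
    then have n: "n < i" using at_b Suc by simp
    then have nV: "n < card V" using iV by simp
    have "c \<le> desc_vector V b ! n"
      using desc_vector_nth_ge_iff[OF fin nV, of c b] Suc by simp
    moreover have "desc_vector V b ! n = desc_vector V a ! n"
      by (metis i(2) n nth_take)
    ultimately have "n < card {v\<in>V. c \<le> a v}"
      using desc_vector_nth_ge_iff[OF fin nV, of c a] by simp
    then show ?thesis using Suc by simp
  qed simp
  then show ?thesis
    using at_a at_b by (intro that[of \<beta>]) auto
qed

text \<open>Only the level count at level \<open>a t\<close> changes: it loses \<open>t\<close>.\<close>

lemma lex_less_desc_vector_move:
  assumes fin: "finite V" and t: "t \<in> V" and gap: "a s + 2 \<le> a t"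
    and bs: "b s = a s + 1" and bt: "b t + 1 = a t"
    and others: "\<And>v. v \<noteq> s \<Longrightarrow> v \<noteq> t \<Longrightarrow> b v = a v"
  shows "lex_less (desc_vector V b) (desc_vector V a)"
proof (rule lex_less_desc_vectorI[OF fin, where \<beta> = "a t"])
  have "c \<le> b v \<longleftrightarrow> c \<le> a v" if "a t < c" for c v
  proof (cases "v = s \<or> v = t")
    case True
    then show ?thesis using that gap bs bt by auto
  next
    case False
    then show ?thesis using others by simp
  qed
  then show "\<forall>c>a t. card {v\<in>V. c \<le> b v} = card {v\<in>V. c \<le> a v}"
    by simp
  have "a t \<le> b v \<longleftrightarrow> a t \<le> a v \<and> v \<noteq> t" for v
  proof (cases "v = s \<or> v = t")
    case True
    then show ?thesis using gap bs bt by auto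
  next
    case False
    then show ?thesis using others by simp
  qed
  then have "{v\<in>V. a t \<le> b v} = {v\<in>V. a t \<le> a v} - {t}"
    by auto
  moreover have "card ({v\<in>V. a t \<le> a v} - {t}) < card {v\<in>V. a t \<le> a v}"
    by (rule card_Diff1_less) (use fin t in auto)
  ultimately show "card {v\<in>V. a t \<le> b v} < card {v\<in>V. a t \<le> a v}"
    by simp
qed

lemma sum_eq_sum_level_cards:
  fixes x :: "'a \<Rightarrow> nat"
  assumes fin: "finite W" and bound: "\<forall>v\<in>W. x v \<le> K"
  shows "(\<Sum>v\<in>W. x v) = (\<Sum>c\<in>{1..K}. card {v\<in>W. c \<le> x v})"
proof -
  have "x v = (\<Sum>c\<in>{1..K}. of_bool (c \<le> x v))" if "v \<in> W" for v
  proof -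
    have "{1..K} \<inter> {c. c \<le> x v} = {1..x v}" using bound that by auto
    then show ?thesis by simp
  qed
  then have "(\<Sum>v\<in>W. x v) = (\<Sum>v\<in>W. \<Sum>c\<in>{1..K}. of_bool (c \<le> x v))"
    by (rule sum.cong[OF refl])
  also have "\<dots> = (\<Sum>c\<in>{1..K}. \<Sum>v\<in>W. of_bool (c \<le> x v))"
    by (rule sum.swap)
  also have "\<dots> = (\<Sum>c\<in>{1..K}. card {v\<in>W. c \<le> x v})"
    using fin by (intro sum.cong[OF refl]) (simp add: Int_def conj_commute)
  finally show ?thesis .
qed

lemma sum_less_if_level_cards_less:
  fixes a b :: "'a \<Rightarrow> nat"
  assumes fin: "finite W"
    and le: "\<And>c. card {v\<in>W. c \<le> b v} \<le> card {v\<in>W. c \<le> a v}"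
    and less: "card {v\<in>W. \<beta> \<le> b v} < card {v\<in>W. \<beta> \<le> a v}"
  shows "(\<Sum>v\<in>W. b v) < (\<Sum>v\<in>W. a v)"
proof -
  define K where "K = \<beta> + (\<Sum>v\<in>W. a v + b v)"
  have bound: "a v \<le> K \<and> b v \<le> K" if "v \<in> W" for v
  proof -
    have "a v + b v \<le> (\<Sum>v\<in>W. a v + b v)"
      by (rule member_le_sum) (use that fin in auto)
    then show ?thesis unfolding K_def by linarith
  qed
  have "\<beta> \<noteq> 0"
    using less by (cases "\<beta> = 0") auto
  then have "\<beta> \<in> {1..K}"
    unfolding K_def by simp
  then have "(\<Sum>c\<in>{1..K}. card {v\<in>W. c \<le> b v}) < (\<Sum>c\<in>{1..K}. card {v\<in>W. c \<le> a v})"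
    by (intro sum_strict_mono_ex1) (use le less in auto)
  moreover have "(\<Sum>v\<in>W. a v) = (\<Sum>c\<in>{1..K}. card {v\<in>W. c \<le> a v})"
    "(\<Sum>v\<in>W. b v) = (\<Sum>c\<in>{1..K}. card {v\<in>W. c \<le> b v})"
    by (intro sum_eq_sum_level_cards[OF fin]; use bound in blast)+
  ultimately show ?thesis
    by simp
qed

lemma sum_less_transfer:
  fixes a b :: "'a \<Rightarrow> nat"
  assumes "finite W" "finite Z" and less: "(\<Sum>v\<in>W. b v) < (\<Sum>v\<in>W. a v)"
    and "\<forall>v\<in>W - Z. a v \<le> b v" "\<forall>v\<in>Z - W. b v \<le> a v"
  shows "(\<Sum>v\<in>Z. b v) < (\<Sum>v\<in>Z. a v)"
proof -
  let ?d = "\<lambda>v. int (a v) - int (b v)"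
  have "0 < sum ?d W"
    using less by (simp add: sum_subtractf flip: of_nat_sum)
  also have "\<dots> = sum ?d (W \<inter> Z) + sum ?d (W - Z)"
    using assms(1) by (rule sum.Int_Diff)
  also have "\<dots> \<le> sum ?d (W \<inter> Z) + sum ?d (Z - W)"
  proof -
    have "sum ?d (W - Z) \<le> 0" "0 \<le> sum ?d (Z - W)"
      using assms(4,5) by (auto intro: sum_nonpos sum_nonneg)
    then show ?thesis by linarith
  qed
  also have "\<dots> = sum ?d Z"
    by (metis Int_commute assms(2) sum.Int_Diff)
  finally show ?thesis
    by (simp add: sum_subtractf flip: of_nat_sum)
qed

text \<open>The sums are compared on \<open>W = {a \<ge> \<beta>} \<union> (Z \<inter> {a = \<beta> - 1})\<close>, where all level
  counts of \<open>b\<close> are dominated by those of \<open>a\<close>; outside \<open>W\<close> the hypotheses on \<open>Z\<close> only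
  allow changes in the right direction.\<close>

lemma sum_less_if_level_cards_less_above:
  fixes a b :: "'a \<Rightarrow> nat"
  assumes fin: "finite V" and ZV: "Z \<subseteq> V"
    and above: "\<forall>c>\<beta>. card {v\<in>V. c \<le> b v} \<le> card {v\<in>V. c \<le> a v}"
    and at: "card {v\<in>V. \<beta> \<le> b v} < card {v\<in>V. \<beta> \<le> a v}"
    and low_in_Z: "\<forall>v\<in>Z. a v + 2 \<le> \<beta> \<longrightarrow> b v \<le> a v"
    and high_outside_Z: "\<forall>v\<in>V - Z. \<beta> \<le> a v \<longrightarrow> a v \<le> b v"
  shows "(\<Sum>v\<in>Z. b v) < (\<Sum>v\<in>Z. a v)"
proof -
  define W where "W = {v\<in>V. \<beta> \<le> a v} \<union> {v\<in>Z. a v + 1 = \<beta>}"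
  have WV: "W \<subseteq> V" using ZV W_def by auto
  then have finW: "finite W" using fin finite_subset by auto
  have top: "{v\<in>W. c \<le> a v} = {v\<in>V. c \<le> a v}" if "\<beta> \<le> c" for c
    using that WV unfolding W_def by auto
  have W_V: "card {v\<in>W. c \<le> b v} \<le> card {v\<in>V. c \<le> b v}" for c
    by (rule card_mono) (use fin WV in auto)
  have le: "card {v\<in>W. c \<le> b v} \<le> card {v\<in>W. c \<le> a v}" for c
  proof (cases "\<beta> \<le> c")
    case True
    then have "card {v\<in>V. c \<le> b v} \<le> card {v\<in>V. c \<le> a v}"
      using above at by (cases "c = \<beta>") auto
    then show ?thesis using W_V[of c] top[OF True] by simp
  next
    case False
    then have "{v\<in>W. c \<le> a v} = W" unfolding W_def by auto
    then show ?thesis using finW by (simp add: card_mono)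
  qed
  have "card {v\<in>W. \<beta> \<le> b v} < card {v\<in>W. \<beta> \<le> a v}"
    using W_V[of \<beta>] top[of \<beta>] at by simp
  then have "(\<Sum>v\<in>W. b v) < (\<Sum>v\<in>W. a v)"
    by (rule sum_less_if_level_cards_less[OF finW le])
  moreover have "\<forall>v\<in>Z - W. b v \<le> a v"
    using low_in_Z ZV unfolding W_def by auto
  ultimately show ?thesis
    using sum_less_transfer[OF finW finite_subset[OF ZV fin]] high_outside_Z WV
    unfolding W_def by auto
qed

section \<open>Reorientation and in-degrees of sets\<close>

definition reverse_arcs :: "('e \<Rightarrow> bool) \<Rightarrow> 'e set \<Rightarrow> 'e \<Rightarrow> bool" where
  "reverse_arcs D A = (\<lambda>e. if e \<in> A then \<not> D e else D e)"

definition indeg_set :: "'e set \<Rightarrow> ('e \<Rightarrow> 'a \<times> 'a) \<Rightarrow> ('e \<Rightarrow> bool) \<Rightarrow> 'a set \<Rightarrow> nat" where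
  "indeg_set E ends D X = card {e\<in>E. head ends D e \<in> X \<and> tail ends D e \<notin> X}"

definition inner_edges :: "'e set \<Rightarrow> ('e \<Rightarrow> 'a \<times> 'a) \<Rightarrow> 'a set \<Rightarrow> nat" where
  "inner_edges E ends X = card {e\<in>E. fst (ends e) \<in> X \<and> snd (ends e) \<in> X}"

definition shifts_indeg ::
  "'e set \<Rightarrow> ('e \<Rightarrow> 'a \<times> 'a) \<Rightarrow> ('e \<Rightarrow> bool) \<Rightarrow> ('e \<Rightarrow> bool) \<Rightarrow> 'a \<Rightarrow> 'a \<Rightarrow> int \<Rightarrow> bool" where
  "shifts_indeg E ends D D' s t c \<longleftrightarrow> (\<forall>v. int (indeg E ends D' v) =
     int (indeg E ends D v) + (if v = s then c else 0) - (if v = t then c else 0))"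

lemma k_edge_connected_iff_indeg_set:
  "k_edge_connected k V E ends D \<longleftrightarrow>
     (\<forall>X. X \<subseteq> V \<and> X \<noteq> {} \<and> X \<noteq> V \<longrightarrow> k \<le> indeg_set E ends D X)"
  by (simp add: k_edge_connected_def indeg_set_def)

lemma indeg_set_eq_0_if_closed:
  assumes "\<And>e. e \<in> E \<Longrightarrow> head ends D e \<in> X \<Longrightarrow> tail ends D e \<in> X"
  shows "indeg_set E ends D X = 0"
proof -
  have "{e\<in>E. head ends D e \<in> X \<and> tail ends D e \<notin> X} = {}"
    using assms by blast
  then show ?thesis unfolding indeg_set_def by (metis card.empty)
qed

lemma head_reverse_arcs:
  "head ends (reverse_arcs D A) e = (if e \<in> A then tail ends D e else head ends D e)"
  by (simp add: reverse_arcs_def head_def tail_def)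

lemma tail_reverse_arcs:
  "tail ends (reverse_arcs D A) e = (if e \<in> A then head ends D e else tail ends D e)"
  by (simp add: reverse_arcs_def head_def tail_def)

lemma sum_indeg_eq_indeg_set_plus_inner_edges:
  assumes "finite E" "finite X"
  shows "(\<Sum>v\<in>X. indeg E ends D v) = indeg_set E ends D X + inner_edges E ends X"
proof -
  have "(\<Sum>v\<in>X. indeg E ends D v) = card (\<Union>v\<in>X. {e\<in>E. head ends D e = v})"
    unfolding indeg_def by (rule card_UN_disjoint[symmetric]) (use assms in auto)
  also have "(\<Union>v\<in>X. {e\<in>E. head ends D e = v}) =
      {e\<in>E. head ends D e \<in> X \<and> tail ends D e \<notin> X} \<union> {e\<in>E. fst (ends e) \<in> X \<and> snd (ends e) \<in> X}"
    by (auto simp: head_def tail_def split: if_splits)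
  also have "card \<dots> = indeg_set E ends D X + inner_edges E ends X"
    unfolding indeg_set_def inner_edges_def
    by (rule card_Un_disjoint) (use assms in \<open>auto simp: head_def tail_def split: if_splits\<close>)
  finally show ?thesis .
qed

text \<open>Inner edges do not depend on the orientation.\<close>

lemma sum_indeg_diff_eq_indeg_set_diff:
  assumes "finite E" "finite X"
  shows "(\<Sum>v\<in>X. int (indeg E ends D v) - int (indeg E ends D' v)) =
    int (indeg_set E ends D X) - int (indeg_set E ends D' X)"
  using sum_indeg_eq_indeg_set_plus_inner_edges[OF assms, of ends D]
    sum_indeg_eq_indeg_set_plus_inner_edges[OF assms, of ends D']
  by (simp add: sum_subtractf flip: of_nat_sum)

lemma indeg_set_shift:
  assumes "finite E" "finite X" and "shifts_indeg E ends D D' s t c"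
  shows "int (indeg_set E ends D' X) =
    int (indeg_set E ends D X) + (if s \<in> X then c else 0) - (if t \<in> X then c else 0)"
proof -
  have "(\<Sum>v\<in>X. int (indeg E ends D' v) - int (indeg E ends D v)) =
      (\<Sum>v\<in>X. (if v = s then c else 0) - (if v = t then c else 0))"
    using assms(3) unfolding shifts_indeg_def by simp
  also have "\<dots> = (if s \<in> X then c else 0) - (if t \<in> X then c else 0)"
    using assms(2) by (simp add: sum_subtractf sum.delta')
  finally show ?thesis
    using sum_indeg_diff_eq_indeg_set_diff[OF assms(1,2), of ends D' D] by simp
qed

lemma shifts_indeg_trans:
  assumes "shifts_indeg E ends D D' s t c" "shifts_indeg E ends D' D'' s t d"
  shows "shifts_indeg E ends D D'' s t (c + d)"
  using assms unfolding shifts_indeg_def by auto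

lemma shifts_indeg_sym:
  assumes "shifts_indeg E ends D D' s t c"
  shows "shifts_indeg E ends D' D s t (- c)"
  using assms unfolding shifts_indeg_def by auto

lemma inner_edges_supermodular:
  assumes "finite E"
  shows "inner_edges E ends X + inner_edges E ends Y \<le>
    inner_edges E ends (X \<union> Y) + inner_edges E ends (X \<inter> Y)"
proof -
  let ?I = "\<lambda>Z. {e\<in>E. fst (ends e) \<in> Z \<and> snd (ends e) \<in> Z}"
  have "card (?I X) + card (?I Y) = card (?I X \<union> ?I Y) + card (?I X \<inter> ?I Y)"
    by (rule card_Un_Int) (use assms in auto)
  moreover have "?I X \<inter> ?I Y = ?I (X \<inter> Y)" by auto
  moreover have "card (?I X \<union> ?I Y) \<le> card (?I (X \<union> Y))"
    by (rule card_mono) (use assms in auto)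
  ultimately show ?thesis unfolding inner_edges_def by simp
qed

lemma indeg_set_submodular:
  assumes "finite E" "finite X" "finite Y"
  shows "indeg_set E ends D (X \<union> Y) + indeg_set E ends D (X \<inter> Y) \<le>
    indeg_set E ends D X + indeg_set E ends D Y"
proof -
  have "(\<Sum>v\<in>X \<union> Y. indeg E ends D v) + (\<Sum>v\<in>X \<inter> Y. indeg E ends D v) =
      (\<Sum>v\<in>X. indeg E ends D v) + (\<Sum>v\<in>Y. indeg E ends D v)"
    using assms(2,3) by (rule sum.union_inter)
  then show ?thesis
    using assms inner_edges_supermodular[OF assms(1), of ends X Y]
    by (simp add: sum_indeg_eq_indeg_set_plus_inner_edges)
qed

lemma int_card_remove:
  assumes "finite A"
  shows "int (card A) = int (card (A - {e})) + of_bool (e \<in> A)"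
proof (cases "e \<in> A")
  case True
  then show ?thesis using card.remove[OF assms True] by simp
qed simp

lemma indeg_reverse_arc:
  assumes fin: "finite E"
  shows "int (indeg E ends (reverse_arcs D {e}) v) = int (indeg E ends D v)
     - of_bool (e \<in> E \<and> v = head ends D e) + of_bool (e \<in> E \<and> v = tail ends D e)"
proof -
  let ?S = "{e'\<in>E. head ends D e' = v}"
  let ?S' = "{e'\<in>E. head ends (reverse_arcs D {e}) e' = v}"
  have same: "?S' - {e} = ?S - {e}"
    by (auto simp: head_reverse_arcs)
  have S: "int (card ?S) = int (card (?S - {e})) + of_bool (e \<in> ?S)"
    using fin by (intro int_card_remove) simp
  have S': "int (card ?S') = int (card (?S' - {e})) + of_bool (e \<in> ?S')"
    using fin by (intro int_card_remove) simp
  have "int (card ?S') = int (card ?S) - of_bool (e \<in> ?S) + of_bool (e \<in> ?S')"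
    using S S' same by simp
  moreover have "e \<in> ?S \<longleftrightarrow> e \<in> E \<and> v = head ends D e"
    by auto
  moreover have "e \<in> ?S' \<longleftrightarrow> e \<in> E \<and> v = tail ends D e"
    by (auto simp: head_reverse_arcs)
  ultimately show ?thesis
    unfolding indeg_def by simp
qed

section \<open>Directed paths\<close>

lemma dir_path_Nil: "dir_path A ends D s s []"
  unfolding dir_path_def by simp

lemma dir_path_mono: "A \<subseteq> B \<Longrightarrow> dir_path A ends D s t p \<Longrightarrow> dir_path B ends D s t p"
  unfolding dir_path_def by blast

lemma dir_path_ConsD:
  assumes "dir_path A ends D s t (e # p)"
  shows "e \<in> A" "tail ends D e = s" "dir_path A ends D (head ends D e) t p" "e \<notin> set p"
proof -
  have distinct: "distinct (s # head ends D e # map (head ends D) p)"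
    using assms unfolding dir_path_def by simp
  have linked: "\<forall>i. Suc i < length (e # p) \<longrightarrow>
      head ends D ((e # p) ! i) = tail ends D ((e # p) ! Suc i)"
    using assms unfolding dir_path_def by blast
  show "e \<in> A" "tail ends D e = s"
    using assms unfolding dir_path_def by auto
  show "e \<notin> set p"
    using distinct by auto
  show "dir_path A ends D (head ends D e) t p"
    unfolding dir_path_def
  proof (intro conjI impI allI)
    show "set p \<subseteq> A"
      using assms unfolding dir_path_def by simp
    show "head ends D e = t" if "p = []"
      using assms that unfolding dir_path_def by simp
    show "tail ends D (hd p) = head ends D e" if "p \<noteq> []"
      using linked[rule_format, of 0] that by (cases p) auto
    show "head ends D (last p) = t" if "p \<noteq> []"
      using assms that unfolding dir_path_def by simp
    show "head ends D (p ! i) = tail ends D (p ! Suc i)" if "Suc i < length p" for i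
      using linked[rule_format, of "Suc i"] that by simp
    show "distinct (head ends D e # map (head ends D) p)"
      using distinct by simp
  qed
qed

lemma dir_path_cong:
  assumes "\<forall>e\<in>set p. D e = D' e"
  shows "dir_path A ends D s t p \<longleftrightarrow> dir_path A ends D' s t p"
proof -
  have "head ends D e = head ends D' e" "tail ends D e = tail ends D' e" if "e \<in> set p" for e
    using assms that by (simp_all add: head_def tail_def)
  then have "map (head ends D) p = map (head ends D') p"
    and "\<And>i. i < length p \<Longrightarrow>
      head ends D (p ! i) = head ends D' (p ! i) \<and> tail ends D (p ! i) = tail ends D' (p ! i)"
    and "p \<noteq> [] \<Longrightarrow> head ends D (last p) = head ends D' (last p) \<and> tail ends D (hd p) = tail ends D' (hd p)"
    by auto
  then show ?thesis
    unfolding dir_path_def by (metis Suc_lessD)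
qed

lemma dir_path_take:
  assumes p: "dir_path A ends D s t p" and i: "i < length p"
  shows "dir_path A ends D s (head ends D (p ! i)) (take (Suc i) p)"
proof -
  have ne: "take (Suc i) p \<noteq> []" using i by (cases p) auto
  have "hd (take (Suc i) p) = hd p" using i by (cases p) auto
  moreover have "last (take (Suc i) p) = p ! i"
    using i ne by (simp add: last_conv_nth)
  moreover have "s # map (head ends D) (take (Suc i) p) = take (Suc (Suc i)) (s # map (head ends D) p)"
    by (simp add: take_map)
  moreover have "set (take (Suc i) p) \<subseteq> set p"
    by (rule set_take_subset)
  ultimately show ?thesis
    using p ne i unfolding dir_path_def by (auto simp: distinct_take simp del: take_Suc_Cons)
qed

lemma dir_path_snoc:
  assumes p: "dir_path A ends D s v p" and e: "e \<in> A" "tail ends D e = v"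
    and new: "head ends D e \<notin> set (s # map (head ends D) p)"
  shows "dir_path A ends D s (head ends D e) (p @ [e])"
proof (cases "p = []")
  case True
  then show ?thesis using p e new unfolding dir_path_def by auto
next
  case False
  have "head ends D ((p @ [e]) ! j) = tail ends D ((p @ [e]) ! Suc j)"
    if j: "Suc j < length (p @ [e])" for j
  proof (cases "Suc j < length p")
    case True
    then show ?thesis using p unfolding dir_path_def by (simp add: nth_append)
  next
    case False
    then have "Suc j = length p" using j by simp
    moreover from this have "p ! j = last p"
      using \<open>p \<noteq> []\<close> by (metis diff_Suc_1 last_conv_nth)
    ultimately show ?thesis
      using p e \<open>p \<noteq> []\<close> unfolding dir_path_def by (simp add: nth_append)
  qed
  then show ?thesis using p False e new unfolding dir_path_def by auto
qed

lemma shifts_indeg_reverse_path: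
  assumes "finite E" "dir_path E ends D a b p"
  shows "shifts_indeg E ends D (reverse_arcs D (set p)) a b 1"
  unfolding shifts_indeg_def
proof
  fix v
  from assms(2) show "int (indeg E ends (reverse_arcs D (set p)) v) =
      int (indeg E ends D v) + (if v = a then 1 else 0) - (if v = b then 1 else 0)"
  proof (induction p arbitrary: a)
    case Nil
    then show ?case unfolding dir_path_def reverse_arcs_def by simp
  next
    case (Cons e p)
    note e = dir_path_ConsD[OF Cons.prems]
    define D' where "D' = reverse_arcs D (set p)"
    have "reverse_arcs D (set (e # p)) = reverse_arcs D' {e}"
      using e(4) unfolding D'_def reverse_arcs_def by auto
    moreover have "head ends D' e = head ends D e" "tail ends D' e = tail ends D e"
      using e(4) by (simp_all add: D'_def head_reverse_arcs tail_reverse_arcs)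
    moreover have "int (indeg E ends D' v) =
        int (indeg E ends D v) + (if v = head ends D e then 1 else 0) - (if v = b then 1 else 0)"
      using Cons.IH[OF e(3)] unfolding D'_def .
    ultimately show ?case
      using indeg_reverse_arc[OF assms(1), of ends D' e v] e(1,2) by auto
  qed
qed

lemma indeg_reverse_path:
  assumes "finite E" "dir_path E ends D s t p" "s \<noteq> t"
  shows "indeg E ends (reverse_arcs D (set p)) s = indeg E ends D s + 1"
    and "indeg E ends (reverse_arcs D (set p)) t + 1 = indeg E ends D t"
    and "v \<noteq> s \<Longrightarrow> v \<noteq> t \<Longrightarrow> indeg E ends (reverse_arcs D (set p)) v = indeg E ends D v"
proof -
  have shift: "int (indeg E ends (reverse_arcs D (set p)) v) =
      int (indeg E ends D v) + (if v = s then 1 else 0) - (if v = t then 1 else 0)" for v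
    using shifts_indeg_reverse_path[OF assms(1,2)] unfolding shifts_indeg_def by blast
  show "indeg E ends (reverse_arcs D (set p)) s = indeg E ends D s + 1"
    using shift[of s] assms(3) by simp
  show "indeg E ends (reverse_arcs D (set p)) t + 1 = indeg E ends D t"
    using shift[of t] assms(3) by simp
  show "indeg E ends (reverse_arcs D (set p)) v = indeg E ends D v" if "v \<noteq> s" "v \<noteq> t"
    using shift[of v] that by simp
qed

definition reachable :: "'e set \<Rightarrow> ('e \<Rightarrow> 'a \<times> 'a) \<Rightarrow> ('e \<Rightarrow> bool) \<Rightarrow> 'a \<Rightarrow> 'a set" where
  "reachable A ends D s = {v. \<exists>p. dir_path A ends D s v p}"

lemma reachable_self: "s \<in> reachable A ends D s"
  unfolding reachable_def using dir_path_Nil by fast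

lemma head_in_reachable:
  assumes v: "v \<in> reachable A ends D s" and e: "e \<in> A" "tail ends D e = v"
  shows "head ends D e \<in> reachable A ends D s"
proof -
  obtain p where p: "dir_path A ends D s v p"
    using v unfolding reachable_def by blast
  show ?thesis
  proof (cases "head ends D e \<in> set (s # map (head ends D) p)")
    case True
    then consider "head ends D e = s" | i where "i < length p" "head ends D e = head ends D (p ! i)"
      by (auto simp: in_set_conv_nth)
    then show ?thesis
    proof cases
      case 1
      then show ?thesis using reachable_self by metis
    next
      case 2
      then show ?thesis using dir_path_take[OF p 2(1)] unfolding reachable_def by auto
    qed
  next
    case False
    then show ?thesis using dir_path_snoc[OF p e False] unfolding reachable_def by blast
  qed
qed

lemma reachable_subset:
  assumes "\<forall>e\<in>A. fst (ends e) \<in> V \<and> snd (ends e) \<in> V" "s \<in> V"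
  shows "reachable A ends D s \<subseteq> V"
proof
  fix v assume "v \<in> reachable A ends D s"
  then obtain p where p: "dir_path A ends D s v p"
    unfolding reachable_def by blast
  show "v \<in> V"
  proof (cases "p = []")
    case True
    then show ?thesis using p assms unfolding dir_path_def by simp
  next
    case False
    then have "last p \<in> A" "head ends D (last p) = v"
      using p unfolding dir_path_def by auto
    then show ?thesis using assms by (auto simp: head_def)
  qed
qed

lemma indeg_set_outside_reachable:
  assumes "\<forall>e\<in>E. fst (ends e) \<in> V \<and> snd (ends e) \<in> V"
  shows "indeg_set E ends D (V - reachable E ends D s) = 0"
proof (rule indeg_set_eq_0_if_closed)
  fix e assume e: "e \<in> E" "head ends D e \<in> V - reachable E ends D s"
  have "tail ends D e \<in> V"
    using e(1) assms by (auto simp: tail_def)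
  moreover have "tail ends D e \<notin> reachable E ends D s"
    using head_in_reachable[of "tail ends D e" E ends D s e] e by blast
  ultimately show "tail ends D e \<in> V - reachable E ends D s" by blast
qed

lemma dir_path_enters:
  "dir_path A ends D s t p \<Longrightarrow> s \<notin> X \<Longrightarrow> t \<in> X \<Longrightarrow>
   \<exists>e\<in>set p. head ends D e \<in> X \<and> tail ends D e \<notin> X"
proof (induction p arbitrary: s)
  case Nil
  then show ?case unfolding dir_path_def by simp
next
  case (Cons e p)
  note e = dir_path_ConsD[OF Cons.prems(1)]
  show ?case
  proof (cases "head ends D e \<in> X")
    case True
    then show ?thesis using e Cons.prems by auto
  next
    case False
    then show ?thesis using Cons.IH[OF e(3)] Cons.prems by auto
  qed
qed

lemma arc_disjoint_paths_le_indeg_set: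
  assumes paths: "arc_disjoint_paths j E ends D s t" and "finite E" "s \<notin> X" "t \<in> X"
  shows "j \<le> indeg_set E ends D X"
proof -
  obtain P where P: "\<forall>i<j. dir_path E ends D s t (P i)"
    "\<forall>i<j. \<forall>i'<j. i \<noteq> i' \<longrightarrow> set (P i) \<inter> set (P i') = {}"
    using paths unfolding arc_disjoint_paths_def by blast
  define c where "c i = (SOME e. e \<in> set (P i) \<and> head ends D e \<in> X \<and> tail ends D e \<notin> X)" for i
  have c: "c i \<in> set (P i) \<and> head ends D (c i) \<in> X \<and> tail ends D (c i) \<notin> X" if "i < j" for i
    unfolding c_def by (rule someI_ex) (use dir_path_enters[OF P(1)[rule_format, OF that]] assms in blast)
  have inj: "inj_on c {..<j}"
  proof (rule inj_onI)
    fix i i' assume "i \<in> {..<j}" "i' \<in> {..<j}" "c i = c i'"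
    then show "i = i'" using c P(2) by (metis disjoint_iff lessThan_iff)
  qed
  have sub: "c ` {..<j} \<subseteq> {e\<in>E. head ends D e \<in> X \<and> tail ends D e \<notin> X}"
    using c P(1) unfolding dir_path_def by blast
  have "j = card (c ` {..<j})"
    using card_image[OF inj] by simp
  also have "\<dots> \<le> indeg_set E ends D X"
    unfolding indeg_set_def by (rule card_mono[OF _ sub]) (use assms(2) in auto)
  finally show ?thesis .
qed

lemma arc_disjoint_paths_Suc:
  assumes paths: "arc_disjoint_paths j B ends D s t" and p: "dir_path A ends D s t p"
    and BA: "B \<subseteq> A" and disjoint: "B \<inter> set p = {}"
  shows "arc_disjoint_paths (Suc j) A ends D s t"
proof -
  obtain P where P: "\<forall>i<j. dir_path B ends D s t (P i)"
    "\<forall>i<j. \<forall>i'<j. i \<noteq> i' \<longrightarrow> set (P i) \<inter> set (P i') = {}"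
    using paths unfolding arc_disjoint_paths_def by blast
  have P_p: "set (P i) \<inter> set p = {}" if "i < j" for i
    using P(1) that disjoint unfolding dir_path_def by blast
  show ?thesis
    unfolding arc_disjoint_paths_def
  proof (intro exI[of _ "P(j := p)"] conjI allI impI)
    fix i assume "i < Suc j"
    then show "dir_path A ends D s t ((P(j := p)) i)"
      using P(1) p by (cases "i = j") (auto intro: dir_path_mono[OF BA] simp: less_Suc_eq)
  next
    fix i i' assume "i < Suc j" "i' < Suc j" "i \<noteq> i'"
    then show "set ((P(j := p)) i) \<inter> set ((P(j := p)) i') = {}"
      using P(2) P_p by (cases "i = j"; cases "i' = j") (auto simp: less_Suc_eq)
  qed
qed

section \<open>Menger's theorem\<close>

text \<open>If every set separating \<open>t\<close> from \<open>s\<close> is entered by \<open>j\<close> arcs, reversing \<open>s\<close>-\<open>t\<close>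
  paths \<open>j\<close> times never gets stuck; conversely, the arcs where the final orientation differs
  from \<open>D\<close> decompose into \<open>j\<close> arc-disjoint \<open>s\<close>-\<open>t\<close> paths of \<open>D\<close>.\<close>

lemma shifts_indeg_exists:
  assumes finV: "finite V" and finE: "finite E"
    and endsV: "\<forall>e\<in>E. fst (ends e) \<in> V \<and> snd (ends e) \<in> V" and tV: "t \<in> V"
  shows "\<forall>X. X \<subseteq> V \<and> t \<in> X \<and> s \<notin> X \<longrightarrow> j \<le> indeg_set E ends D X \<Longrightarrow>
    \<exists>D'. shifts_indeg E ends D D' s t (int j)"
proof (induction j)
  case 0
  have "shifts_indeg E ends D D s t 0"
    by (simp add: shifts_indeg_def)
  then show ?case by auto
next
  case (Suc j)
  then obtain D1 where D1: "shifts_indeg E ends D D1 s t (int j)"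
    by (metis Suc_leD)
  have "t \<in> reachable E ends D1 s"
  proof (rule ccontr)
    define X where "X = V - reachable E ends D1 s"
    assume "t \<notin> reachable E ends D1 s"
    then have X: "X \<subseteq> V" "t \<in> X" "s \<notin> X"
      using tV reachable_self unfolding X_def by auto
    then have "finite X" using finV finite_subset by auto
    have "int (indeg_set E ends D1 X) = int (indeg_set E ends D X) - int j"
      using indeg_set_shift[OF finE \<open>finite X\<close> D1] X by simp
    moreover have "indeg_set E ends D1 X = 0"
      unfolding X_def by (rule indeg_set_outside_reachable[OF endsV])
    moreover have "Suc j \<le> indeg_set E ends D X"
      using Suc.prems X by blast
    ultimately show False by linarith
  qed
  then obtain p where "dir_path E ends D1 s t p"
    unfolding reachable_def by blast
  then have "shifts_indeg E ends D1 (reverse_arcs D1 (set p)) s t 1"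
    by (rule shifts_indeg_reverse_path[OF finE])
  then have "shifts_indeg E ends D (reverse_arcs D1 (set p)) s t (int (Suc j))"
    using shifts_indeg_trans[OF D1] by (simp add: add.commute)
  then show ?case by blast
qed

lemma reachable_if_shifts_indeg:
  assumes finV: "finite V" and finE: "finite E"
    and endsV: "\<forall>e\<in>E. fst (ends e) \<in> V \<and> snd (ends e) \<in> V" and sV: "s \<in> V"
    and shift: "shifts_indeg E ends D D' s t c" and "c > 0"
  shows "t \<in> reachable {e\<in>E. D' e \<noteq> D e} ends D s"
proof (rule ccontr)
  define R where "R = reachable {e\<in>E. D' e \<noteq> D e} ends D s"
  assume "t \<notin> R"
  have "R \<subseteq> V"
    unfolding R_def by (rule reachable_subset) (use endsV sV in auto)
  then have "finite R" using finV finite_subset by auto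
  have "s \<in> R"
    unfolding R_def by (rule reachable_self)
  have "head ends D e \<in> R \<and> tail ends D e \<notin> R"
    if e: "e \<in> E" "head ends D' e \<in> R" "tail ends D' e \<notin> R" for e
  proof (cases "D' e = D e")
    case True
    then show ?thesis using e by (simp add: head_def tail_def)
  next
    case False
    then have "tail ends D e \<in> R" "head ends D e \<notin> R"
      using e by (auto simp: head_def tail_def)
    moreover have "head ends D e \<in> R"
      using head_in_reachable[of "tail ends D e" _ ends D s e] e(1) False \<open>tail ends D e \<in> R\<close>
      unfolding R_def by auto
    ultimately show ?thesis by blast
  qed
  then have "{e\<in>E. head ends D' e \<in> R \<and> tail ends D' e \<notin> R} \<subseteq>
      {e\<in>E. head ends D e \<in> R \<and> tail ends D e \<notin> R}"
    by blast
  then have "indeg_set E ends D' R \<le> indeg_set E ends D R"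
    unfolding indeg_set_def by (rule card_mono[rotated]) (use finE in auto)
  moreover have "int (indeg_set E ends D' R) = int (indeg_set E ends D R) + c"
    using indeg_set_shift[OF finE \<open>finite R\<close> shift] \<open>s \<in> R\<close> \<open>t \<notin> R\<close> by simp
  ultimately show False using \<open>c > 0\<close> by linarith
qed

lemma arc_disjoint_paths_if_shifts_indeg:
  assumes "finite V" and finE: "finite E"
    and "\<forall>e\<in>E. fst (ends e) \<in> V \<and> snd (ends e) \<in> V" and "s \<in> V"
  shows "shifts_indeg E ends D D' s t (int j) \<Longrightarrow> arc_disjoint_paths j {e\<in>E. D' e \<noteq> D e} ends D s t"
proof (induction j arbitrary: D')
  case 0
  show ?case by (simp add: arc_disjoint_paths_def)
next
  case (Suc j)
  define F where "F = {e\<in>E. D' e \<noteq> D e}"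
  have "t \<in> reachable F ends D s"
    unfolding F_def by (rule reachable_if_shifts_indeg[OF assms Suc.prems]) simp
  then obtain p where p: "dir_path F ends D s t p"
    unfolding reachable_def by blast
  then have pF: "set p \<subseteq> F"
    unfolding dir_path_def by simp
  define D'' where "D'' = reverse_arcs D' (set p)"
  have "\<forall>e\<in>set p. D'' e = D e"
    using pF unfolding D''_def F_def reverse_arcs_def by auto
  moreover have "dir_path E ends D s t p"
    by (rule dir_path_mono[OF _ p]) (auto simp: F_def)
  ultimately have "dir_path E ends D'' s t p"
    by (rule dir_path_cong[THEN iffD2])
  then have "shifts_indeg E ends D'' (reverse_arcs D'' (set p)) s t 1"
    by (rule shifts_indeg_reverse_path[OF finE])
  moreover have "reverse_arcs D'' (set p) = D'"
    unfolding D''_def reverse_arcs_def by auto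
  ultimately have "shifts_indeg E ends D'' D' s t 1"
    by simp
  then have "shifts_indeg E ends D D'' s t (int (Suc j) + - 1)"
    by (rule shifts_indeg_trans[OF Suc.prems shifts_indeg_sym])
  then have "shifts_indeg E ends D D'' s t (int j)"
    by simp
  then have "arc_disjoint_paths j {e\<in>E. D'' e \<noteq> D e} ends D s t"
    by (rule Suc.IH)
  moreover have "{e\<in>E. D'' e \<noteq> D e} \<subseteq> F" "{e\<in>E. D'' e \<noteq> D e} \<inter> set p = {}"
    using pF unfolding D''_def F_def reverse_arcs_def by auto
  ultimately show ?case
    unfolding F_def by (intro arc_disjoint_paths_Suc[OF _ p[unfolded F_def]])
qed

lemma menger_arc_disjoint_paths:
  assumes "finite V" "finite E" "\<forall>e\<in>E. fst (ends e) \<in> V \<and> snd (ends e) \<in> V" "s \<in> V" "t \<in> V"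
    and "\<forall>X. X \<subseteq> V \<and> t \<in> X \<and> s \<notin> X \<longrightarrow> j \<le> indeg_set E ends D X"
  shows "arc_disjoint_paths j E ends D s t"
proof -
  obtain D' where "shifts_indeg E ends D D' s t (int j)"
    using shifts_indeg_exists[OF assms(1-3,5,6)] by blast
  then have "arc_disjoint_paths j {e\<in>E. D' e \<noteq> D e} ends D s t"
    by (rule arc_disjoint_paths_if_shifts_indeg[OF assms(1-4)])
  moreover have "dir_path {e\<in>E. D' e \<noteq> D e} ends D s t p \<Longrightarrow> dir_path E ends D s t p" for p
    by (rule dir_path_mono[rotated]) auto
  ultimately show ?thesis
    unfolding arc_disjoint_paths_def by blast
qed

section \<open>Uncrossing\<close>

lemma card_insert_Diff2_less:
  assumes "finite A" "X \<in> A" "Y \<in> A" "X \<noteq> Y"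
  shows "card (insert Z (A - {X, Y})) < card A"
proof -
  have "card (A - {X, Y}) = card A - 2"
    using assms by (simp add: card_Diff_subset)
  moreover have "card {X, Y} \<le> card A"
    using assms by (intro card_mono) auto
  moreover have "card (insert Z (A - {X, Y})) \<le> Suc (card (A - {X, Y}))"
    using assms by (simp add: card_insert_if)
  ultimately show ?thesis
    using assms by simp
qed

locale nonpositive_crossing_family =
  fixes V :: "'a set" and C :: "'a set \<Rightarrow> bool" and h :: "'a \<Rightarrow> int"
  assumes finite_V: "finite V"
    and C_subset: "\<And>X. C X \<Longrightarrow> X \<subseteq> V"
    and C_crossing: "\<And>X Y. C X \<Longrightarrow> C Y \<Longrightarrow> X \<inter> Y \<noteq> {} \<Longrightarrow> X \<union> Y \<noteq> V \<Longrightarrow> C (X \<inter> Y) \<and> C (X \<union> Y)"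
    and C_nonpos: "\<And>X. C X \<Longrightarrow> sum h X \<le> 0"
    and sum_V: "sum h V = 0"
begin

text \<open>Two members whose union is not \<open>V\<close> may be replaced by their intersection. Once all
  unions are \<open>V\<close>, the complements are disjoint, and each has weight \<open>-h(X) \<ge> 0\<close>.\<close>

lemma sum_Inter_nonpos:
  "finite \<X> \<Longrightarrow> \<X> \<noteq> {} \<Longrightarrow> \<forall>X\<in>\<X>. C X \<Longrightarrow> \<Inter>\<X> \<noteq> {} \<Longrightarrow> sum h (\<Inter>\<X>) \<le> 0"
proof (induction "card \<X>" arbitrary: \<X> rule: less_induct)
  case less
  show ?case
  proof (cases "\<exists>X\<in>\<X>. \<exists>Y\<in>\<X>. X \<noteq> Y \<and> X \<union> Y \<noteq> V")
    case True
    then obtain X Y where XY: "X \<in> \<X>" "Y \<in> \<X>" "X \<noteq> Y" "X \<union> Y \<noteq> V"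
      by blast
    define \<X>' where "\<X>' = insert (X \<inter> Y) (\<X> - {X, Y})"
    have same: "\<Inter>\<X>' = \<Inter>\<X>"
      unfolding \<X>'_def using XY by auto
    have "C (X \<inter> Y)"
      using C_crossing[of X Y] less.prems XY by blast
    have "sum h (\<Inter>\<X>') \<le> 0"
      by (rule less.hyps[OF card_insert_Diff2_less[OF less.prems(1) XY(1-3), of "X \<inter> Y", folded \<X>'_def]])
        (use less.prems \<open>C (X \<inter> Y)\<close> same in \<open>auto simp: \<X>'_def\<close>)
    then show ?thesis
      using same by simp
  next
    case False
    have sub: "\<Inter>\<X> \<subseteq> V"
      using less.prems(2,3) C_subset by blast
    have "V - \<Inter>\<X> = (\<Union>X\<in>\<X>. V - X)"
      by auto
    then have "sum h (V - \<Inter>\<X>) = (\<Sum>X\<in>\<X>. sum h (V - X))"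
      using sum.UNION_disjoint[OF less.prems(1), of "\<lambda>X. V - X" h] finite_V False by auto
    also have "\<dots> = (\<Sum>X\<in>\<X>. - sum h X)"
    proof (rule sum.cong[OF refl])
      fix X assume "X \<in> \<X>"
      then show "sum h (V - X) = - sum h X"
        using sum.subset_diff[OF C_subset finite_V, of X h] less.prems(3) sum_V by simp
    qed
    also have "\<dots> \<ge> 0"
      using C_nonpos less.prems(3) by (simp add: sum_nonpos sum_negf)
    finally show ?thesis
      using sum.subset_diff[OF sub finite_V, of h] sum_V by linarith
  qed
qed

definition avoiding :: "'a set \<Rightarrow> ('a \<Rightarrow> 'a set) \<Rightarrow> bool" where
  "avoiding S B \<longleftrightarrow> (\<forall>s\<in>S. C (B s) \<and> s \<notin> B s) \<and> \<Inter>(B ` S) \<noteq> {}"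

lemma avoiding_sup:
  assumes "S \<subseteq> V" "avoiding S B1" "avoiding S B2" "\<Inter>(B1 ` S) \<inter> \<Inter>(B2 ` S) \<noteq> {}"
  shows "avoiding S (\<lambda>s. B1 s \<union> B2 s)"
  unfolding avoiding_def
proof (intro conjI ballI)
  fix s assume s: "s \<in> S"
  have B1: "C (B1 s)" "s \<notin> B1 s" and B2: "C (B2 s)" "s \<notin> B2 s"
    using assms(2,3) s unfolding avoiding_def by auto
  moreover have "B1 s \<inter> B2 s \<noteq> {}"
    using assms(4) s by blast
  moreover have "B1 s \<union> B2 s \<noteq> V"
    using B1 B2 s assms(1) by auto
  ultimately show "C (B1 s \<union> B2 s)" "s \<notin> B1 s \<union> B2 s"
    using C_crossing[OF B1(1) B2(1)] by auto
next
  show "\<Inter>((\<lambda>s. B1 s \<union> B2 s) ` S) \<noteq> {}"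
    using assms(4) by blast
qed

lemma core_avoiding:
  assumes "S \<subseteq> V" "S \<noteq> {}" "avoiding S B"
  shows "\<Inter>(B ` S) \<subseteq> V" "\<Inter>(B ` S) \<inter> S = {}" "sum h (\<Inter>(B ` S)) \<le> 0"
proof -
  obtain s0 where "s0 \<in> S" using assms(2) by blast
  then have "\<Inter>(B ` S) \<subseteq> B s0" "C (B s0)"
    using assms(3) unfolding avoiding_def by auto
  then show "\<Inter>(B ` S) \<subseteq> V"
    using C_subset by blast
  show "\<Inter>(B ` S) \<inter> S = {}"
    using assms(3) unfolding avoiding_def by blast
  show "sum h (\<Inter>(B ` S)) \<le> 0"
    using assms finite_subset[OF assms(1) finite_V] by (intro sum_Inter_nonpos) (auto simp: avoiding_def)
qed

text \<open>Two choices whose cores meet are merged into their pointwise union; once all cores are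
  disjoint, their union is the required set.\<close>

lemma Union_cores_subset_nonpos:
  assumes SV: "S \<subseteq> V" and "S \<noteq> {}"
  shows "finite \<B> \<Longrightarrow> \<forall>B\<in>\<B>. avoiding S B \<Longrightarrow>
    \<exists>Z\<subseteq>V. (\<Union>B\<in>\<B>. \<Inter>(B ` S)) \<subseteq> Z \<and> Z \<inter> S = {} \<and> sum h Z \<le> 0"
proof (induction "card \<B>" arbitrary: \<B> rule: less_induct)
  case less
  show ?case
  proof (cases "\<exists>B1\<in>\<B>. \<exists>B2\<in>\<B>. B1 \<noteq> B2 \<and> \<Inter>(B1 ` S) \<inter> \<Inter>(B2 ` S) \<noteq> {}")
    case True
    then obtain B1 B2 where B: "B1 \<in> \<B>" "B2 \<in> \<B>" "B1 \<noteq> B2" "\<Inter>(B1 ` S) \<inter> \<Inter>(B2 ` S) \<noteq> {}"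
      by blast
    define M where "M s = B1 s \<union> B2 s" for s
    define \<B>' where "\<B>' = insert M (\<B> - {B1, B2})"
    have "avoiding S M"
      unfolding M_def using avoiding_sup[OF SV _ _ B(4)] less.prems(2) B(1,2) by blast
    then have "finite \<B>'" "\<forall>B\<in>\<B>'. avoiding S B"
      using less.prems unfolding \<B>'_def by auto
    then obtain Z where Z: "Z \<subseteq> V" "(\<Union>B\<in>\<B>'. \<Inter>(B ` S)) \<subseteq> Z" "Z \<inter> S = {}" "sum h Z \<le> 0"
      using less.hyps[OF card_insert_Diff2_less[OF less.prems(1) B(1-3), of M, folded \<B>'_def]]
      by blast
    have "\<Inter>(B ` S) \<subseteq> Z" if "B \<in> \<B>" for B
    proof (cases "B = B1 \<or> B = B2")
      case True
      then have "\<Inter>(B ` S) \<subseteq> \<Inter>(M ` S)"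
        unfolding M_def by auto
      moreover have "\<Inter>(M ` S) \<subseteq> Z"
        using Z(2) unfolding \<B>'_def by auto
      ultimately show ?thesis by (rule order_trans)
    next
      case False
      then have "B \<in> \<B>'"
        using that unfolding \<B>'_def by simp
      then show ?thesis
        using Z(2) by auto
    qed
    then show ?thesis
      using Z(1,3,4) by (intro exI[of _ Z] conjI UN_least)
  next
    case False
    note core = core_avoiding[OF SV \<open>S \<noteq> {}\<close>]
    have "sum h (\<Union>B\<in>\<B>. \<Inter>(B ` S)) = (\<Sum>B\<in>\<B>. sum h (\<Inter>(B ` S)))"
    proof (rule sum.UNION_disjoint)
      show "finite \<B>" by (rule less.prems(1))
      show "\<forall>B\<in>\<B>. finite (\<Inter>(B ` S))"
        using core(1) less.prems(2) finite_V by (auto intro: finite_subset)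
      show "\<forall>B\<in>\<B>. \<forall>B'\<in>\<B>. B \<noteq> B' \<longrightarrow> \<Inter>(B ` S) \<inter> \<Inter>(B' ` S) = {}"
        using False by meson
    qed
    also have "\<dots> \<le> 0"
      using core(3) less.prems(2) by (simp add: sum_nonpos)
    finally show ?thesis
      using core(1,2) less.prems(2)
      by (intro exI[of _ "\<Union>B\<in>\<B>. \<Inter>(B ` S)"] conjI UN_least) auto
  qed
qed

lemma separating_set_nonpos:
  assumes SV: "S \<subseteq> V" and TV: "T \<subseteq> V"
    and separated: "\<forall>t\<in>T. \<forall>s\<in>S. \<exists>X. C X \<and> t \<in> X \<and> s \<notin> X"
  shows "\<exists>Z\<subseteq>V. T \<subseteq> Z \<and> Z \<inter> S = {} \<and> sum h Z \<le> 0"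
proof (cases "S = {}")
  case True
  then show ?thesis using TV sum_V by (intro exI[of _ V]) auto
next
  case False
  define B where "B t s = (SOME X. C X \<and> t \<in> X \<and> s \<notin> X)" for t s
  have B: "C (B t s) \<and> t \<in> B t s \<and> s \<notin> B t s" if "t \<in> T" "s \<in> S" for t s
    unfolding B_def using someI_ex[OF separated[rule_format, OF that]] by blast
  then have core: "t \<in> \<Inter>(B t ` S)" if "t \<in> T" for t
    using that by blast
  have "\<forall>B'\<in>B ` T. avoiding S B'"
    using B core unfolding avoiding_def by blast
  then have "\<exists>Z\<subseteq>V. (\<Union>B'\<in>B ` T. \<Inter>(B' ` S)) \<subseteq> Z \<and> Z \<inter> S = {} \<and> sum h Z \<le> 0"
    by (rule Union_cores_subset_nonpos[OF SV False finite_imageI[OF finite_subset[OF TV finite_V]]])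
  moreover have "T \<subseteq> (\<Union>B'\<in>B ` T. \<Inter>(B' ` S))"
    using core by auto
  ultimately show ?thesis
    by (meson order_trans)
qed

end

section \<open>Decreasingly minimal orientations\<close>

definition tight_set :: "nat \<Rightarrow> 'a set \<Rightarrow> 'e set \<Rightarrow> ('e \<Rightarrow> 'a \<times> 'a) \<Rightarrow> ('e \<Rightarrow> bool) \<Rightarrow> 'a set \<Rightarrow> bool" where
  "tight_set k V E ends D X \<longleftrightarrow> X \<subseteq> V \<and> X \<noteq> {} \<and> X \<noteq> V \<and> indeg_set E ends D X = k"

lemma tight_set_Int_Un:
  assumes finV: "finite V" and finE: "finite E" and kec: "k_edge_connected k V E ends D"
    and X: "tight_set k V E ends D X" and Y: "tight_set k V E ends D Y"
    and meet: "X \<inter> Y \<noteq> {}" and cover: "X \<union> Y \<noteq> V"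
  shows "tight_set k V E ends D (X \<inter> Y) \<and> tight_set k V E ends D (X \<union> Y)"
proof -
  have XY: "X \<subseteq> V" "Y \<subseteq> V" "indeg_set E ends D X = k" "indeg_set E ends D Y = k"
    using X Y unfolding tight_set_def by auto
  then have "X \<inter> Y \<noteq> V" "X \<union> Y \<noteq> {}" "X \<inter> Y \<subseteq> V" "X \<union> Y \<subseteq> V"
    using meet cover by auto
  then have "k \<le> indeg_set E ends D (X \<inter> Y)" "k \<le> indeg_set E ends D (X \<union> Y)"
    using kec meet cover unfolding k_edge_connected_iff_indeg_set by blast+
  moreover have "finite X" "finite Y"
    using XY finV finite_subset by auto
  then have "indeg_set E ends D (X \<union> Y) + indeg_set E ends D (X \<inter> Y) \<le>
      indeg_set E ends D X + indeg_set E ends D Y"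
    by (rule indeg_set_submodular[OF finE])
  ultimately show ?thesis
    using XY \<open>X \<inter> Y \<subseteq> V\<close> \<open>X \<union> Y \<subseteq> V\<close> \<open>X \<inter> Y \<noteq> V\<close> \<open>X \<union> Y \<noteq> {}\<close> meet cover
    unfolding tight_set_def by linarith
qed

lemma tight_sets_nonpositive_crossing_family:
  assumes finV: "finite V" and finE: "finite E"
    and endsV: "\<forall>e\<in>E. fst (ends e) \<in> V \<and> snd (ends e) \<in> V"
    and kec: "k_edge_connected k V E ends D" and kec': "k_edge_connected k V E ends D'"
  shows "nonpositive_crossing_family V (tight_set k V E ends D)
    (\<lambda>v. int (indeg E ends D v) - int (indeg E ends D' v))"
proof
  show "finite V" by (rule finV)
  show "X \<subseteq> V" if "tight_set k V E ends D X" for X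
    using that unfolding tight_set_def by blast
  show "(\<Sum>v\<in>X. int (indeg E ends D v) - int (indeg E ends D' v)) \<le> 0"
    if X: "tight_set k V E ends D X" for X
  proof -
    have "X \<subseteq> V" "X \<noteq> {}" "X \<noteq> V" "indeg_set E ends D X = k"
      using X unfolding tight_set_def by auto
    moreover from this have "k \<le> indeg_set E ends D' X"
      using kec' unfolding k_edge_connected_iff_indeg_set by blast
    moreover have "finite X"
      using \<open>X \<subseteq> V\<close> finV finite_subset by auto
    ultimately show ?thesis
      using sum_indeg_diff_eq_indeg_set_diff[OF finE, of X ends D D'] by simp
  qed
  have "indeg_set E ends D'' V = 0" for D''
    by (rule indeg_set_eq_0_if_closed) (use endsV in \<open>auto simp: tail_def\<close>)
  then show "(\<Sum>v\<in>V. int (indeg E ends D v) - int (indeg E ends D' v)) = 0"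
    using sum_indeg_diff_eq_indeg_set_diff[OF finE finV, of ends D D'] by simp
qed (rule tight_set_Int_Un[OF finV finE kec])

lemma tight_set_separating:
  assumes "finite V" "finite E" "\<forall>e\<in>E. fst (ends e) \<in> V \<and> snd (ends e) \<in> V"
    and kec: "k_edge_connected k V E ends D" and "s \<in> V" "t \<in> V"
    and no_paths: "\<not> arc_disjoint_paths (k + 1) E ends D s t"
  shows "\<exists>X. tight_set k V E ends D X \<and> t \<in> X \<and> s \<notin> X"
proof (rule ccontr)
  assume none: "\<nexists>X. tight_set k V E ends D X \<and> t \<in> X \<and> s \<notin> X"
  have "k + 1 \<le> indeg_set E ends D X" if X: "X \<subseteq> V" "t \<in> X" "s \<notin> X" for X
  proof -
    have "X \<noteq> {}" "X \<noteq> V"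
      using X \<open>s \<in> V\<close> by auto
    then have "k \<le> indeg_set E ends D X"
      using kec X(1) unfolding k_edge_connected_iff_indeg_set by simp
    moreover have "indeg_set E ends D X \<noteq> k"
      using none X \<open>X \<noteq> {}\<close> \<open>X \<noteq> V\<close> unfolding tight_set_def by auto
    ultimately show ?thesis by simp
  qed
  then have "arc_disjoint_paths (k + 1) E ends D s t"
    by (intro menger_arc_disjoint_paths[OF assms(1-3,5,6)]) simp
  then show False
    using no_paths by contradiction
qed

lemma k_edge_connected_reverse_path:
  assumes finV: "finite V" and finE: "finite E"
    and kec: "k_edge_connected k V E ends D"
    and paths: "arc_disjoint_paths (k + 1) E ends D s t" and p: "dir_path E ends D s t p"
  shows "k_edge_connected k V E ends (reverse_arcs D (set p))"
  unfolding k_edge_connected_iff_indeg_set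
proof (intro allI impI)
  fix X assume X: "X \<subseteq> V \<and> X \<noteq> {} \<and> X \<noteq> V"
  then have "finite X" using finV finite_subset by auto
  have k: "k \<le> indeg_set E ends D X"
    using kec X unfolding k_edge_connected_iff_indeg_set by blast
  have shift: "int (indeg_set E ends (reverse_arcs D (set p)) X) =
      int (indeg_set E ends D X) + (if s \<in> X then 1 else 0) - (if t \<in> X then 1 else 0)"
    by (rule indeg_set_shift[OF finE \<open>finite X\<close> shifts_indeg_reverse_path[OF finE p]])
  show "k \<le> indeg_set E ends (reverse_arcs D (set p)) X"
  proof (cases "t \<in> X \<and> s \<notin> X")
    case True
    then have "k + 1 \<le> indeg_set E ends D X"
      using arc_disjoint_paths_le_indeg_set[OF paths finE] by blast
    then show ?thesis using shift True by simp
  next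
    case False
    then show ?thesis using shift k by (cases "s \<in> X"; cases "t \<in> X") auto
  qed
qed

lemma integral_ereal_less_imp_le_minus_one:
  assumes "x = -\<infinity> \<or> (\<exists>n::int. x = ereal (real_of_int n))" "x < ereal (real (a::nat))"
  shows "x \<le> ereal (real a - 1)"
proof (cases "x = -\<infinity>")
  case False
  then obtain n :: int where n: "x = ereal (real_of_int n)" using assms(1) by blast
  then have "n < int a" using assms(2) by simp
  then show ?thesis using n by simp
qed simp

lemma integral_ereal_greater_imp_ge_plus_one:
  assumes "x = \<infinity> \<or> (\<exists>n::int. x = ereal (real_of_int n))" "ereal (real (a::nat)) < x"
  shows "ereal (real a + 1) \<le> x"
proof (cases "x = \<infinity>")
  case False
  then obtain n :: int where n: "x = ereal (real_of_int n)" using assms(1) by blast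
  then have "int a < n" using assms(2) by simp
  then show ?thesis using n by simp
qed simp

lemma fg_bounded_indeg_le:
  "fg_bounded V E ends f g D \<Longrightarrow> v \<in> V \<Longrightarrow> g v \<le> ereal (real n) \<Longrightarrow> indeg E ends D v \<le> n"
  unfolding fg_bounded_def by (metis ereal_less_eq(3) of_nat_le_iff order_trans)

lemma fg_bounded_indeg_ge:
  "fg_bounded V E ends f g D \<Longrightarrow> v \<in> V \<Longrightarrow> ereal (real n) \<le> f v \<Longrightarrow> n \<le> indeg E ends D v"
  unfolding fg_bounded_def by (metis ereal_less_eq(3) of_nat_le_iff order_trans)

lemma fg_bounded_reverse_path:
  assumes finE: "finite E" and bnd: "fg_bounded V E ends f g D"
    and p: "dir_path E ends D s t p" and "s \<noteq> t"
    and f_int: "f t = -\<infinity> \<or> (\<exists>n::int. f t = ereal (real_of_int n))"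
    and g_int: "g s = \<infinity> \<or> (\<exists>n::int. g s = ereal (real_of_int n))"
    and t_above: "f t < ereal (real (indeg E ends D t))"
    and s_below: "ereal (real (indeg E ends D s)) < g s"
  shows "fg_bounded V E ends f g (reverse_arcs D (set p))"
  unfolding fg_bounded_def
proof
  fix v assume "v \<in> V"
  define m where "m = indeg E ends D"
  define m' where "m' = indeg E ends (reverse_arcs D (set p))"
  note m' = indeg_reverse_path[OF finE p \<open>s \<noteq> t\<close>, folded m_def m'_def]
  have bounds: "f v \<le> ereal (real (m v))" "ereal (real (m v)) \<le> g v"
    using bnd \<open>v \<in> V\<close> unfolding fg_bounded_def m_def by auto
  consider "v = s" | "v = t" | "v \<noteq> s" "v \<noteq> t" by blast
  then have "f v \<le> ereal (real (m' v)) \<and> ereal (real (m' v)) \<le> g v"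
  proof cases
    case 1
    have "ereal (real (m s) + 1) \<le> g s"
      using integral_ereal_greater_imp_ge_plus_one[OF g_int s_below] unfolding m_def .
    moreover have "f s \<le> ereal (real (m s) + 1)"
      using bounds 1 by (auto elim: order_trans)
    ultimately show ?thesis using 1 m'(1) by (simp add: add.commute)
  next
    case 2
    have "f t \<le> ereal (real (m t) - 1)"
      using integral_ereal_less_imp_le_minus_one[OF f_int t_above] unfolding m_def .
    moreover have "ereal (real (m t) - 1) \<le> g t"
      using bounds 2 by (auto elim: order_trans[rotated])
    moreover have "real (m' t) = real (m t) - 1"
      using m'(2) by (simp flip: of_nat_Suc)
    ultimately show ?thesis using 2 by simp
  next
    case 3
    then show ?thesis using bounds m'(3) by simp
  qed
  then show "f v \<le> ereal (real (indeg E ends (reverse_arcs D (set p)) v)) \<and>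
      ereal (real (indeg E ends (reverse_arcs D (set p)) v)) \<le> g v"
    unfolding m'_def .
qed

lemma improving_pair_imp_better_orientation:
  assumes finV: "finite V" and finE: "finite E"
    and kec: "k_edge_connected k V E ends D" and bnd: "fg_bounded V E ends f g D"
    and f_int: "f t = -\<infinity> \<or> (\<exists>n::int. f t = ereal (real_of_int n))"
    and g_int: "g s = \<infinity> \<or> (\<exists>n::int. g s = ereal (real_of_int n))"
    and "t \<in> V" and gap: "indeg E ends D s + 2 \<le> indeg E ends D t"
    and t_above: "f t < ereal (real (indeg E ends D t))"
    and s_below: "ereal (real (indeg E ends D s)) < g s"
    and paths: "arc_disjoint_paths (k + 1) E ends D s t"
  shows "\<exists>D'. (k_edge_connected k V E ends D' \<and> fg_bounded V E ends f g D') \<and>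
    lex_less (indeg_desc V E ends D') (indeg_desc V E ends D)"
proof -
  obtain P where "\<forall>i<k + 1. dir_path E ends D s t (P i)"
    using paths unfolding arc_disjoint_paths_def by blast
  then have p: "dir_path E ends D s t (P 0)"
    by simp
  have "s \<noteq> t" using gap by auto
  define D' where "D' = reverse_arcs D (set (P 0))"
  note D' = indeg_reverse_path[OF finE p \<open>s \<noteq> t\<close>, folded D'_def]
  have "lex_less (desc_vector V (indeg E ends D')) (desc_vector V (indeg E ends D))"
    by (rule lex_less_desc_vector_move[OF finV \<open>t \<in> V\<close> gap D'])
  moreover have "k_edge_connected k V E ends D'"
    unfolding D'_def by (rule k_edge_connected_reverse_path[OF finV finE kec paths p])
  moreover have "fg_bounded V E ends f g D'"
    unfolding D'_def by (rule fg_bounded_reverse_path[OF finE bnd p \<open>s \<noteq> t\<close> f_int g_int t_above s_below])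
  ultimately show ?thesis
    unfolding indeg_desc_eq_desc_vector by blast
qed

lemma tight_separator_indeg_sum:
  assumes finV: "finite V" and finE: "finite E"
    and endsV: "\<forall>e\<in>E. fst (ends e) \<in> V \<and> snd (ends e) \<in> V"
    and kec: "k_edge_connected k V E ends D" and kec': "k_edge_connected k V E ends D'"
    and "S \<subseteq> V" "T \<subseteq> V" and no_paths: "\<forall>t\<in>T. \<forall>s\<in>S. \<not> arc_disjoint_paths (k + 1) E ends D s t"
  shows "\<exists>Z\<subseteq>V. T \<subseteq> Z \<and> Z \<inter> S = {} \<and>
    (\<Sum>v\<in>Z. indeg E ends D v) \<le> (\<Sum>v\<in>Z. indeg E ends D' v)"
proof -
  interpret nonpositive_crossing_family V "tight_set k V E ends D"
    "\<lambda>v. int (indeg E ends D v) - int (indeg E ends D' v)"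
    by (rule tight_sets_nonpositive_crossing_family[OF finV finE endsV kec kec'])
  have "\<forall>t\<in>T. \<forall>s\<in>S. \<exists>X. tight_set k V E ends D X \<and> t \<in> X \<and> s \<notin> X"
    using tight_set_separating[OF finV finE endsV kec] no_paths assms(6,7) by blast
  then obtain Z where "Z \<subseteq> V" "T \<subseteq> Z" "Z \<inter> S = {}"
    and "(\<Sum>v\<in>Z. int (indeg E ends D v) - int (indeg E ends D' v)) \<le> 0"
    using separating_set_nonpos[OF assms(6,7)] by blast
  then show ?thesis
    by (intro exI[of _ Z]) (simp add: sum_subtractf flip: of_nat_sum)
qed

lemma better_orientation_imp_improving_pair:
  assumes finV: "finite V" and finE: "finite E"
    and endsV: "\<forall>e\<in>E. fst (ends e) \<in> V \<and> snd (ends e) \<in> V"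
    and kec: "k_edge_connected k V E ends D"
    and kec': "k_edge_connected k V E ends D'" and bnd': "fg_bounded V E ends f g D'"
    and lex: "lex_less (indeg_desc V E ends D') (indeg_desc V E ends D)"
  shows "\<exists>s\<in>V. \<exists>t\<in>V. indeg E ends D s + 2 \<le> indeg E ends D t \<and>
    f t < ereal (real (indeg E ends D t)) \<and> ereal (real (indeg E ends D s)) < g s \<and>
    arc_disjoint_paths (k + 1) E ends D s t"
proof (rule ccontr)
  assume no_pair: "\<not> ?thesis"
  define m where "m = indeg E ends D"
  define m' where "m' = indeg E ends D'"
  obtain \<beta> where above: "\<forall>c>\<beta>. card {v\<in>V. c \<le> m' v} \<le> card {v\<in>V. c \<le> m v}"
    and at: "card {v\<in>V. \<beta> \<le> m' v} < card {v\<in>V. \<beta> \<le> m v}"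
    using lex_less_desc_vectorE[OF finV lex[unfolded indeg_desc_eq_desc_vector]]
    unfolding m_def m'_def by blast
  define T where "T = {v\<in>V. \<beta> \<le> m v \<and> f v < ereal (real (m v))}"
  define S where "S = {v\<in>V. m v + 2 \<le> \<beta> \<and> ereal (real (m v)) < g v}"
  have "\<forall>t\<in>T. \<forall>s\<in>S. \<not> arc_disjoint_paths (k + 1) E ends D s t"
    using no_pair unfolding S_def T_def m_def by fastforce
  then obtain Z where Z: "Z \<subseteq> V" "T \<subseteq> Z" "Z \<inter> S = {}"
    and "(\<Sum>v\<in>Z. m v) \<le> (\<Sum>v\<in>Z. m' v)"
    using tight_separator_indeg_sum[OF finV finE endsV kec kec', of S T]
    unfolding S_def T_def m_def m'_def by blast
  moreover have "(\<Sum>v\<in>Z. m' v) < (\<Sum>v\<in>Z. m v)"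
  proof (rule sum_less_if_level_cards_less_above[OF finV Z(1) above at])
    show "\<forall>v\<in>Z. m v + 2 \<le> \<beta> \<longrightarrow> m' v \<le> m v"
    proof (intro ballI impI)
      fix v assume "v \<in> Z" "m v + 2 \<le> \<beta>"
      then have "v \<in> V" "g v \<le> ereal (real (m v))"
        using Z unfolding S_def by auto
      then show "m' v \<le> m v"
        unfolding m'_def by (rule fg_bounded_indeg_le[OF bnd'])
    qed
    show "\<forall>v\<in>V - Z. \<beta> \<le> m v \<longrightarrow> m v \<le> m' v"
    proof (intro ballI impI)
      fix v assume "v \<in> V - Z" "\<beta> \<le> m v"
      then have "v \<in> V" "ereal (real (m v)) \<le> f v"
        using Z unfolding T_def by auto
      then show "m v \<le> m' v"
        unfolding m'_def by (rule fg_bounded_indeg_ge[OF bnd'])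
    qed
  qed
  ultimately show False by simp
qed

theorem theorem6p8:
  fixes V :: "'a set" and E :: "'e set" and ends :: "'e \<Rightarrow> 'a \<times> 'a"
    and k :: nat and f g :: "'a \<Rightarrow> ereal" and D :: "'e \<Rightarrow> bool"
  assumes "finite V" and "finite E"
    and "\<forall>e\<in>E. fst (ends e) \<in> V \<and> snd (ends e) \<in> V"
    and "k > 0"
    and "\<forall>v\<in>V. f v = -\<infinity> \<or> (\<exists>n::int. f v = ereal (real_of_int n))"
    and "\<forall>v\<in>V. g v = \<infinity> \<or> (\<exists>n::int. g v = ereal (real_of_int n))"
    and "\<forall>v\<in>V. f v \<le> g v"
    and "k_edge_connected k V E ends D" and "fg_bounded V E ends f g D"
  shows "dec_min V E ends (\<lambda>D'. k_edge_connected k V E ends D' \<and> fg_bounded V E ends f g D') D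
     \<longleftrightarrow> \<not> (\<exists>s\<in>V. \<exists>t\<in>V.
             indeg E ends D s + 2 \<le> indeg E ends D t \<and>
             f t < ereal (real (indeg E ends D t)) \<and>
             ereal (real (indeg E ends D s)) < g s \<and>
             arc_disjoint_paths (k + 1) E ends D s t)"
  (is "dec_min V E ends ?P D \<longleftrightarrow> \<not> (\<exists>s\<in>V. \<exists>t\<in>V. ?improving s t)")
proof
  assume "dec_min V E ends ?P D"
  then have "\<not> (\<exists>D'. ?P D' \<and> lex_less (indeg_desc V E ends D') (indeg_desc V E ends D))"
    unfolding dec_min_def by blast
  then show "\<not> (\<exists>s\<in>V. \<exists>t\<in>V. ?improving s t)"
    using improving_pair_imp_better_orientation[OF assms(1,2,8,9)] assms(5,6) by blast
next
  assume "\<not> (\<exists>s\<in>V. \<exists>t\<in>V. ?improving s t)"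
  then show "dec_min V E ends ?P D"
    using better_orientation_imp_improving_pair[OF assms(1-3,8)] assms(8,9) unfolding dec_min_def by blast
qed

end
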